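(* For every fixed positive integer $d$, let $f_d(n)$ be the largest integer such that every poset on $n$ elements has a subposet on $f_d(n)$ elements of dimension at most $d$. Then \[ f_d(n) = O\left(n^{\frac{d}{d+1}}\right) \quad (n\to\infty), \] where the implied constant may depend on $d$.
   Context: A subposet of a poset $P$ is a subset of its ground set with the order induced from $P$. The dimension of a poset $P$ is the least integer $d$ such that there are $d$ linear extensions of $P$ whose intersection is $P$ (equivalently, the least $d$ such that $P$ embeds into $\mathbb{R}^d$ with the coordinatewise product order). *)

theory Defs
  imports Main "HOL-Library.Landau_Symbols"
begin

definition linear_extension :: "'a set \<Rightarrow> 'a rel \<Rightarrow> 'a rel \<Rightarrow> bool" where
  "linear_extension A r L \<longleftrightarrow> linear_order_on A L \<and> r \<subseteq> L"

definition realizer :: "'a set \<Rightarrow> 'a rel \<Rightarrow> nat \<Rightarrow> (nat \<Rightarrow> 'a rel) \<Rightarrow> bool" where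
  "realizer A r k L \<longleftrightarrow>
     (\<forall>i<k. linear_extension A r (L i)) \<and> r = {p \<in> A \<times> A. \<forall>i<k. p \<in> L i}"

definition poset_dim :: "'a set \<Rightarrow> 'a rel \<Rightarrow> nat" where
  "poset_dim A r = (LEAST k. \<exists>L. realizer A r k L)"

definition induced :: "'a rel \<Rightarrow> 'a set \<Rightarrow> 'a rel" where
  "induced r S = r \<inter> (S \<times> S)"

text \<open>f_d(n): the largest m such that every poset on n elements (w.l.o.g. with
  ground set {..<n}) has a subposet on m elements of dimension at most d.\<close>
definition f_dim :: "nat \<Rightarrow> nat \<Rightarrow> nat" where
  "f_dim d n = (GREATEST m. \<forall>r. partial_order_on {..<n} r \<longrightarrow>
       (\<exists>S \<subseteq> {..<n}. card S = m \<and> poset_dim S (induced r S) \<le> d))"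

end

theory Submission
  imports Defs "HOL-Library.FuncSet" "HOL-Library.Product_Lexorder"
begin

text \<open>
  Take as poset the product order on n points of the grid [m]^(d+1), where m is about n^(1/(d+1)).
  A subposet of dimension at most d cannot contain the standard example S_(d+1), which has
  dimension d+1; in the grid this says that its point set avoids a fixed (d+1)-dimensional
  pattern. By the multidimensional Marcus--Tardos theorem (Klazar--Marcus) such a set has
  O(m^d) = O(n^(d/(d+1))) points.

  That theorem is proved by induction on the dimension. Cut the grid into blocks of side t; the
  nonempty blocks again form a pattern-avoiding set. A block whose points occupy at least |I|
  residues in some coordinate i is wide in direction i; wide blocks in a common row along i with
  a common set of residues project, away from i, to a pattern-avoiding set of lower dimension, so
  there are few of them. Narrow blocks contain few points.
\<close>

lemma exists_strict_mono_on_into: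
  fixes A :: "'a::linorder set" and B :: "'b::linorder set"
  assumes "finite A" "finite B" "card A \<le> card B"
  shows "\<exists>f. f ` A \<subseteq> B \<and> strict_mono_on A f"
  using assms
proof (induction "card A" arbitrary: A B)
  case 0
  then show ?case by (auto intro: strict_mono_onI)
next
  case (Suc n)
  then have "A \<noteq> {}" "B \<noteq> {}" by auto
  define a0 where "a0 = Max A"
  define b0 where "b0 = Max B"
  have a0: "a0 \<in> A" "\<And>a. a \<in> A \<Longrightarrow> a \<le> a0" using Suc \<open>A \<noteq> {}\<close> by (auto simp: a0_def)
  have b0: "b0 \<in> B" "\<And>b. b \<in> B \<Longrightarrow> b \<le> b0" using Suc \<open>B \<noteq> {}\<close> by (auto simp: b0_def)
  have "n = card (A - {a0})" "card (A - {a0}) \<le> card (B - {b0})" using Suc a0 b0 by auto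
  then obtain f where f: "f ` (A - {a0}) \<subseteq> B - {b0}" "strict_mono_on (A - {a0}) f"
    using Suc by (metis finite_Diff)
  have below_b0: "f a < b0" if "a \<in> A - {a0}" for a
    using f(1) b0 that by (metis Diff_iff image_subset_iff insertI1 order_neq_le_trans)
  show ?case
  proof (intro exI[of _ "f(a0 := b0)"] conjI strict_mono_onI)
    show "(f(a0 := b0)) ` A \<subseteq> B" using f(1) b0 by auto
  next
    fix a a' assume "a \<in> A" "a' \<in> A" "a < a'"
    then show "(f(a0 := b0)) a < (f(a0 := b0)) a'"
      using strict_mono_onD[OF f(2)] below_b0 a0(1) a0(2)[OF \<open>a' \<in> A\<close>] by (cases "a' = a0") auto
  qed
qed

definition grid :: "'c set \<Rightarrow> nat \<Rightarrow> ('c \<Rightarrow> nat) set" where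
  "grid D m = (\<Pi>\<^sub>E c\<in>D. {..<m})"

text \<open>The multidimensional analogue of containment of a permutation matrix.\<close>
definition contains_pattern :: "'c set \<Rightarrow> 'i set \<Rightarrow> ('c \<Rightarrow> 'i \<Rightarrow> nat) \<Rightarrow> ('c \<Rightarrow> nat) set \<Rightarrow> bool" where
  "contains_pattern D I \<pi> X \<longleftrightarrow>
     (\<exists>\<phi>. \<phi> ` I \<subseteq> X \<and> (\<forall>c\<in>D. \<forall>i\<in>I. \<forall>j\<in>I. \<pi> c i < \<pi> c j \<longrightarrow> \<phi> i c < \<phi> j c))"

lemma finite_grid: "finite D \<Longrightarrow> finite (grid D m)"
  unfolding grid_def by (rule finite_PiE) auto

lemma card_grid: "finite D \<Longrightarrow> card (grid D m) = m ^ card D"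
  unfolding grid_def by (simp add: card_PiE)

lemma grid_mono: "m \<le> m' \<Longrightarrow> grid D m \<subseteq> grid D m'"
  unfolding grid_def by (auto simp: PiE_iff intro: less_le_trans)

lemma grid_0: "D \<noteq> {} \<Longrightarrow> grid D 0 = {}"
  unfolding grid_def by (auto simp: PiE_eq_empty_iff)

lemma contains_pattern_transfer:
  assumes "contains_pattern D I \<pi> Y" "g ` Y \<subseteq> X"
    and "\<And>y y' c. y \<in> Y \<Longrightarrow> y' \<in> Y \<Longrightarrow> c \<in> D \<Longrightarrow> y c < y' c \<Longrightarrow> g y c < g y' c"
  shows "contains_pattern D I \<pi> X"
proof -
  obtain \<phi> where "\<phi> ` I \<subseteq> Y" "\<forall>c\<in>D. \<forall>i\<in>I. \<forall>j\<in>I. \<pi> c i < \<pi> c j \<longrightarrow> \<phi> i c < \<phi> j c"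
    using assms(1) unfolding contains_pattern_def by blast
  with assms(2,3) show ?thesis
    unfolding contains_pattern_def by (intro exI[of _ "g \<circ> \<phi>"]) (auto simp: image_subset_iff)
qed

lemma contains_pattern_singleton:
  assumes X: "X \<subseteq> grid {c} m" and I: "finite I" "card I \<le> card X"
  shows "contains_pattern {c} I \<pi> X"
proof -
  have inj: "inj_on (\<lambda>x. x c) X"
  proof (rule inj_onI)
    fix x y assume "x \<in> X" "y \<in> X" "x c = y c"
    with X show "x = y" unfolding grid_def by (intro PiE_ext[of x "{c}" _ y]) auto
  qed
  have "finite X" using X finite_grid[of "{c}" m] finite_subset by auto
  moreover have "card (\<pi> c ` I) \<le> card ((\<lambda>x. x c) ` X)"
    using card_image_le[OF I(1), of "\<pi> c"] I(2) card_image[OF inj] by auto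
  ultimately obtain g where g: "g ` \<pi> c ` I \<subseteq> (\<lambda>x. x c) ` X" "strict_mono_on (\<pi> c ` I) g"
    using exists_strict_mono_on_into[of "\<pi> c ` I" "(\<lambda>x. x c) ` X"] I(1) by auto
  define \<phi> where "\<phi> i = inv_into X (\<lambda>x. x c) (g (\<pi> c i))" for i
  have \<phi>: "\<phi> i \<in> X" "\<phi> i c = g (\<pi> c i)" if "i \<in> I" for i
  proof -
    have "g (\<pi> c i) \<in> (\<lambda>x. x c) ` X" using g(1) that by auto
    then show "\<phi> i \<in> X" "\<phi> i c = g (\<pi> c i)"
      unfolding \<phi>_def by (fact inv_into_into, fact f_inv_into_f)
  qed
  show ?thesis
    unfolding contains_pattern_def using \<phi> strict_mono_onD[OF g(2)] by (intro exI[of _ \<phi>]) auto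
qed

definition block :: "'c set \<Rightarrow> nat \<Rightarrow> ('c \<Rightarrow> nat) \<Rightarrow> ('c \<Rightarrow> nat)" where
  "block D t x = (\<lambda>c\<in>D. x c div t)"

definition block_residues :: "('c \<Rightarrow> nat) set \<Rightarrow> 'c set \<Rightarrow> nat \<Rightarrow> ('c \<Rightarrow> nat) \<Rightarrow> 'c \<Rightarrow> nat set" where
  "block_residues X D t b i = (\<lambda>x. x i mod t) ` {x \<in> X. block D t x = b}"

lemma block_in_grid: "x \<in> grid D (M * t) \<Longrightarrow> block D t x \<in> grid D M"
  unfolding grid_def block_def by (auto simp: PiE_iff less_mult_imp_div_less)

lemma block_less_imp_less:
  assumes "c \<in> D" "block D t x c < block D t y c"
  shows "x c < y c"
proof -
  have "x c div t < y c div t" using assms by (simp add: block_def)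
  then show ?thesis using div_le_mono not_le by blast
qed

lemma same_block_mod_less_imp_less:
  assumes "c \<in> D" "block D t x c = block D t y c" "x c mod t < y c mod t"
  shows "x c < y c"
proof -
  have "x c div t = y c div t" using assms(1,2) by (simp add: block_def)
  then have "x c = y c div t * t + x c mod t" by (metis div_mult_mod_eq)
  also have "\<dots> < y c div t * t + y c mod t" using assms(3) by (rule add_strict_left_mono)
  also have "\<dots> = y c" by (rule div_mult_mod_eq)
  finally show ?thesis .
qed

lemma contains_pattern_block_image:
  assumes "contains_pattern D I \<pi> (block D t ` X)"
  shows "contains_pattern D I \<pi> X"
proof (rule contains_pattern_transfer[OF assms])
  let ?rep = "inv_into X (block D t)"
  show "?rep ` block D t ` X \<subseteq> X"
    using inv_into_into[of _ "block D t" X] by blast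
  fix y y' c assume y: "y \<in> block D t ` X" "y' \<in> block D t ` X" and "c \<in> D" "y c < y' c"
  then have "block D t (?rep y) c < block D t (?rep y') c"
    by (simp only: f_inv_into_f[OF y(1)] f_inv_into_f[OF y(2)])
  then show "?rep y c < ?rep y' c" using \<open>c \<in> D\<close> by (rule block_less_imp_less[rotated])
qed

lemma card_block_fibre_le:
  assumes D: "finite D" and Y: "Y \<subseteq> grid D N" "\<And>x. x \<in> Y \<Longrightarrow> block D t x = b"
  shows "card Y \<le> (\<Prod>i\<in>D. card ((\<lambda>x. x i mod t) ` Y))"
proof -
  let ?residues = "\<lambda>x. \<lambda>c\<in>D. x c mod t"
  have "inj_on ?residues Y"
  proof (rule inj_onI)
    fix x y assume xy: "x \<in> Y" "y \<in> Y" "?residues x = ?residues y"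
    show "x = y"
    proof (rule PiE_ext[of x D "\<lambda>_. {..<N}" y])
      show "x \<in> (\<Pi>\<^sub>E c\<in>D. {..<N})" "y \<in> (\<Pi>\<^sub>E c\<in>D. {..<N})" using xy Y unfolding grid_def by auto
      fix c assume c: "c \<in> D"
      have "block D t x c = block D t y c" using Y(2)[OF xy(1)] Y(2)[OF xy(2)] by simp
      then have "x c div t = y c div t" using c by (simp add: block_def)
      moreover have "x c mod t = y c mod t" using fun_cong[OF xy(3), of c] c by simp
      ultimately have "x c div t * t + x c mod t = y c div t * t + y c mod t" by simp
      then show "x c = y c" by simp
    qed
  qed
  then have "card Y = card (?residues ` Y)" by (simp add: card_image)
  also have "\<dots> \<le> card (\<Pi>\<^sub>E i\<in>D. (\<lambda>x. x i mod t) ` Y)"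
    using Y(1) finite_subset[OF Y(1) finite_grid[OF D]] by (intro card_mono) (auto intro!: finite_PiE D)
  also have "\<dots> = (\<Prod>i\<in>D. card ((\<lambda>x. x i mod t) ` Y))" by (simp add: card_PiE D)
  finally show ?thesis .
qed

lemma contains_pattern_wide_blocks:
  assumes I: "finite I" and S: "finite S" "card I \<le> card S"
    and W: "\<And>b. b \<in> W \<Longrightarrow> b i = h \<and> S \<subseteq> block_residues X D t b i"
    and contains: "contains_pattern (D - {i}) I \<pi> ((\<lambda>b. restrict b (D - {i})) ` W)"
  shows "contains_pattern D I \<pi> X"
proof -
  let ?proj = "\<lambda>b. restrict b (D - {i})"
  obtain \<psi> where \<psi>: "\<psi> ` I \<subseteq> ?proj ` W"
      "\<forall>c\<in>D - {i}. \<forall>l\<in>I. \<forall>l'\<in>I. \<pi> c l < \<pi> c l' \<longrightarrow> \<psi> l c < \<psi> l' c"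
    using contains unfolding contains_pattern_def by blast
  have "card (\<pi> i ` I) \<le> card S" using card_image_le[OF I, of "\<pi> i"] S(2) by linarith
  then obtain g where g: "g ` \<pi> i ` I \<subseteq> S" "strict_mono_on (\<pi> i ` I) g"
    using exists_strict_mono_on_into[OF finite_imageI[OF I] S(1)] by blast
  define bl where "bl l = inv_into W ?proj (\<psi> l)" for l
  have bl: "bl l \<in> W" "?proj (bl l) = \<psi> l" if "l \<in> I" for l
  proof -
    have "\<psi> l \<in> ?proj ` W" using \<psi>(1) that by blast
    then show "bl l \<in> W" "?proj (bl l) = \<psi> l" unfolding bl_def by (fact inv_into_into, fact f_inv_into_f)
  qed
  have rep: "\<exists>x. x \<in> X \<and> block D t x = bl l \<and> x i mod t = g (\<pi> i l)" if "l \<in> I" for l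
  proof -
    have "g (\<pi> i l) \<in> S" using g(1) that by blast
    then have "g (\<pi> i l) \<in> (\<lambda>x. x i mod t) ` {x \<in> X. block D t x = bl l}"
      using W[OF bl(1)[OF that]] unfolding block_residues_def by blast
    then obtain x where "x \<in> {x \<in> X. block D t x = bl l}" "g (\<pi> i l) = x i mod t" by (rule imageE)
    then show ?thesis by auto
  qed
  define \<phi> where "\<phi> l = (SOME x. x \<in> X \<and> block D t x = bl l \<and> x i mod t = g (\<pi> i l))" for l
  have \<phi>: "\<phi> l \<in> X" "block D t (\<phi> l) = bl l" "\<phi> l i mod t = g (\<pi> i l)" if "l \<in> I" for l
    using someI_ex[OF rep[OF that]] unfolding \<phi>_def by blast+
  show ?thesis
    unfolding contains_pattern_def
  proof (intro exI[of _ \<phi>] conjI ballI impI)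
    show "\<phi> ` I \<subseteq> X" using \<phi>(1) by blast
  next
    fix c l l' assume c: "c \<in> D" and l: "l \<in> I" "l' \<in> I" and less: "\<pi> c l < \<pi> c l'"
    show "\<phi> l c < \<phi> l' c"
    proof (cases "c = i")
      case True
      have "bl l i = h" "bl l' i = h" using W[OF bl(1)[OF l(1)]] W[OF bl(1)[OF l(2)]] by simp_all
      then have "block D t (\<phi> l) c = block D t (\<phi> l') c" using \<phi>(2) l True by simp
      moreover have "\<phi> l c mod t < \<phi> l' c mod t"
        using \<phi>(3) l strict_mono_onD[OF g(2) imageI[OF l(1)] imageI[OF l(2)] less[unfolded True]] True by simp
      ultimately show ?thesis by (rule same_block_mod_less_imp_less[OF c])
    next
      case False
      then have "c \<in> D - {i}" using c by blast
      then have "\<psi> l c < \<psi> l' c" using \<psi>(2) l less by blast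
      then have "?proj (bl l) c < ?proj (bl l') c" using bl(2) l by simp
      then have "block D t (\<phi> l) c < block D t (\<phi> l') c" using \<phi>(2) l \<open>c \<in> D - {i}\<close> by simp
      then show ?thesis by (rule block_less_imp_less[OF c])
    qed
  qed
qed

lemma card_wide_blocks_le:
  assumes D: "finite D" and I: "finite I" and i: "i \<in> D" and t: "t > 0"
    and lower: "\<And>Y. Y \<subseteq> grid (D - {i}) M \<Longrightarrow> \<not> contains_pattern (D - {i}) I \<pi> Y \<Longrightarrow> card Y \<le> Cl"
    and X: "X \<subseteq> grid D (M * t)" "\<not> contains_pattern D I \<pi> X"
  shows "card {b \<in> block D t ` X. card I \<le> card (block_residues X D t b i)} \<le> M * ((t choose card I) * Cl)"
proof -
  define row where "row h S = {b \<in> block D t ` X. b i = h \<and> S \<subseteq> block_residues X D t b i}" for h S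
  define SS where "SS = {S. S \<subseteq> {..<t} \<and> card S = card I}"
  have blocks_grid: "block D t ` X \<subseteq> grid D M" using X(1) block_in_grid by blast
  have cover: "{b \<in> block D t ` X. card I \<le> card (block_residues X D t b i)} \<subseteq> (\<Union>h<M. \<Union>S\<in>SS. row h S)"
  proof
    fix b assume "b \<in> {b \<in> block D t ` X. card I \<le> card (block_residues X D t b i)}"
    then have b: "b \<in> block D t ` X" "card I \<le> card (block_residues X D t b i)" by simp_all
    obtain S where S: "S \<subseteq> block_residues X D t b i" "card S = card I"
      using b(2) by (rule obtain_subset_with_card_n)
    have "block_residues X D t b i \<subseteq> {..<t}" unfolding block_residues_def using t by auto
    with S have "S \<in> SS" unfolding SS_def by simp
    moreover have "b \<in> grid D M" using b(1) blocks_grid ..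
    then have "b i < M" using i unfolding grid_def by (auto dest: PiE_mem)
    moreover have "b \<in> row (b i) S" using b(1) S(1) unfolding row_def by simp
    ultimately show "b \<in> (\<Union>h<M. \<Union>S\<in>SS. row h S)" by blast
  qed
  have finite_SS: "finite SS" unfolding SS_def by (rule finite_subset[of _ "Pow {..<t}"]) auto
  have card_SS: "card SS = t choose card I" unfolding SS_def using n_subsets[of "{..<t}" "card I"] by simp
  have finite_row: "finite (row h S)" for h S
    using finite_subset[OF blocks_grid finite_grid[OF D]] unfolding row_def by auto
  have card_row: "card (row h S) \<le> Cl" if "S \<in> SS" for h S
  proof -
    let ?proj = "\<lambda>b. restrict b (D - {i})"
    have "inj_on ?proj (row h S)"
    proof (rule inj_onI)
      fix b b' assume b: "b \<in> row h S" "b' \<in> row h S" and proj: "?proj b = ?proj b'"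
      have "b \<in> grid D M" "b' \<in> grid D M" using b blocks_grid unfolding row_def by blast+
      then have "b \<in> (\<Pi>\<^sub>E c\<in>D. {..<M})" "b' \<in> (\<Pi>\<^sub>E c\<in>D. {..<M})" unfolding grid_def .
      then show "b = b'"
      proof (rule PiE_ext)
        fix c assume "c \<in> D"
        then show "b c = b' c"
          using b fun_cong[OF proj, of c] unfolding row_def by (cases "c = i") auto
      qed
    qed
    moreover have "?proj ` row h S \<subseteq> grid (D - {i}) M"
    proof
      fix y assume "y \<in> ?proj ` row h S"
      then obtain b where "b \<in> grid D M" "y = ?proj b" using blocks_grid unfolding row_def by blast
      then show "y \<in> grid (D - {i}) M" unfolding grid_def by (simp add: restrict_PiE_iff PiE_iff)
    qed
    moreover have "\<not> contains_pattern (D - {i}) I \<pi> (?proj ` row h S)"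
    proof
      have S: "finite S" "card I \<le> card S" using that unfolding SS_def by (auto intro: finite_subset)
      have W: "b i = h \<and> S \<subseteq> block_residues X D t b i" if "b \<in> row h S" for b
        using that unfolding row_def by blast
      assume "contains_pattern (D - {i}) I \<pi> (?proj ` row h S)"
      from contains_pattern_wide_blocks[OF I S W this] X(2) show False by contradiction
    qed
    ultimately show ?thesis using lower[of "?proj ` row h S"] card_image[of ?proj "row h S"] by simp
  qed
  have "card {b \<in> block D t ` X. card I \<le> card (block_residues X D t b i)} \<le> card (\<Union>h<M. \<Union>S\<in>SS. row h S)"
    using finite_row finite_SS by (intro card_mono[OF _ cover]) blast
  also have "\<dots> \<le> (\<Sum>h<M. \<Sum>S\<in>SS. card (row h S))"
    by (intro order.trans[OF card_UN_le] sum_mono card_UN_le finite_SS) simp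
  also have "\<dots> \<le> (\<Sum>h<M. \<Sum>S\<in>SS. Cl)" by (intro sum_mono card_row)
  also have "\<dots> = M * ((t choose card I) * Cl)" by (simp add: card_SS)
  finally show ?thesis .
qed

lemma card_avoiding_le_blocks:
  assumes D: "finite D" and I: "finite I" and t: "t > 0"
    and lower: "\<And>i Y. i \<in> D \<Longrightarrow> Y \<subseteq> grid (D - {i}) M \<Longrightarrow> \<not> contains_pattern (D - {i}) I \<pi> Y \<Longrightarrow> card Y \<le> Cl"
    and coarse: "\<And>Y. Y \<subseteq> grid D M \<Longrightarrow> \<not> contains_pattern D I \<pi> Y \<Longrightarrow> card Y \<le> Cb"
    and X: "X \<subseteq> grid D (M * t)" "\<not> contains_pattern D I \<pi> X"
  shows "card X \<le> card D * (M * ((t choose card I) * Cl)) * t ^ card D + Cb * (card I - 1) ^ card D"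
proof -
  define B where "B = block D t ` X"
  define fibre where "fibre b = {x \<in> X. block D t x = b}" for b
  define wide where "wide = (\<Union>i\<in>D. {b \<in> B. card I \<le> card (block_residues X D t b i)})"
  have "finite X" using X(1) finite_grid[OF D] by (rule finite_subset)
  then have finite_B: "finite B" unfolding B_def by (rule finite_imageI)
  have "B \<subseteq> grid D M" unfolding B_def using X(1) by (auto intro: block_in_grid)
  moreover have "\<not> contains_pattern D I \<pi> B"
  proof
    assume "contains_pattern D I \<pi> B"
    then have "contains_pattern D I \<pi> X" unfolding B_def by (rule contains_pattern_block_image)
    with X(2) show False by contradiction
  qed
  ultimately have card_B: "card B \<le> Cb" by (rule coarse)
  have card_wide: "card wide \<le> card D * (M * ((t choose card I) * Cl))"
  proof -
    have "card wide \<le> (\<Sum>i\<in>D. card {b \<in> B. card I \<le> card (block_residues X D t b i)})"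
      unfolding wide_def by (rule card_UN_le[OF D])
    also have "\<dots> \<le> (\<Sum>i\<in>D. M * ((t choose card I) * Cl))"
    proof (rule sum_mono)
      fix i assume i: "i \<in> D"
      show "card {b \<in> B. card I \<le> card (block_residues X D t b i)} \<le> M * ((t choose card I) * Cl)"
        unfolding B_def using card_wide_blocks_le[OF D I i t lower[OF i] X] .
    qed
    finally show ?thesis by simp
  qed
  have card_fibre: "card (fibre b) \<le> (\<Prod>i\<in>D. card (block_residues X D t b i))" for b
  proof -
    have "fibre b \<subseteq> grid D (M * t)" using X(1) unfolding fibre_def by blast
    moreover have "block D t x = b" if "x \<in> fibre b" for x using that unfolding fibre_def by blast
    ultimately have "card (fibre b) \<le> (\<Prod>i\<in>D. card ((\<lambda>x. x i mod t) ` fibre b))"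
      by (rule card_block_fibre_le[OF D])
    then show ?thesis unfolding fibre_def block_residues_def .
  qed
  have full_fibre: "card (fibre b) \<le> t ^ card D" for b
  proof -
    have "block_residues X D t b i \<subseteq> {..<t}" for i unfolding block_residues_def using t by auto
    then have "card (block_residues X D t b i) \<le> t" for i by (metis card_lessThan card_mono finite_lessThan)
    then have "(\<Prod>i\<in>D. card (block_residues X D t b i)) \<le> (\<Prod>i\<in>D. t)" by (intro prod_mono) simp
    then show ?thesis using card_fibre[of b] by simp
  qed
  have narrow_fibre: "card (fibre b) \<le> (card I - 1) ^ card D" if b: "b \<in> B - wide" for b
  proof -
    have "card (block_residues X D t b i) \<le> card I - 1" if "i \<in> D" for i
    proof -
      have "\<not> card I \<le> card (block_residues X D t b i)" using b that unfolding wide_def by blast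
      then show ?thesis by linarith
    qed
    then have "(\<Prod>i\<in>D. card (block_residues X D t b i)) \<le> (\<Prod>i\<in>D. card I - 1)"
      by (intro prod_mono) simp
    then show ?thesis using card_fibre[of b] by simp
  qed
  have "X = (\<Union>b\<in>B. fibre b)" unfolding B_def fibre_def by blast
  then have "card X \<le> (\<Sum>b\<in>B. card (fibre b))" using card_UN_le[OF finite_B, of fibre] by simp
  also have "\<dots> = (\<Sum>b\<in>B \<inter> wide. card (fibre b)) + (\<Sum>b\<in>B - wide. card (fibre b))"
    using finite_B by (rule sum.Int_Diff)
  also have "\<dots> \<le> card (B \<inter> wide) * t ^ card D + card (B - wide) * (card I - 1) ^ card D"
  proof (rule add_mono)
    show "(\<Sum>b\<in>B \<inter> wide. card (fibre b)) \<le> card (B \<inter> wide) * t ^ card D"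
      using sum_bounded_above[of "B \<inter> wide" "\<lambda>b. card (fibre b)"] full_fibre by simp
    show "(\<Sum>b\<in>B - wide. card (fibre b)) \<le> card (B - wide) * (card I - 1) ^ card D"
      using sum_bounded_above[of "B - wide" "\<lambda>b. card (fibre b)"] narrow_fibre by simp
  qed
  also have "\<dots> \<le> card wide * t ^ card D + Cb * (card I - 1) ^ card D"
  proof (intro add_mono mult_le_mono1)
    have "wide \<subseteq> B" unfolding wide_def by blast
    then show "card (B \<inter> wide) \<le> card wide" by (simp add: Int_absorb1)
    show "card (B - wide) \<le> Cb" using card_mono[OF finite_B, of "B - wide"] card_B by simp
  qed
  also have "\<dots> \<le> card D * (M * ((t choose card I) * Cl)) * t ^ card D + Cb * (card I - 1) ^ card D"
    using card_wide by simp
  finally show ?thesis .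
qed

lemma card_avoiding_le_at_powers:
  assumes D: "finite D" and I: "finite I" and t: "t > 0"
    and lower: "\<And>i M Y. i \<in> D \<Longrightarrow> Y \<subseteq> grid (D - {i}) M \<Longrightarrow> \<not> contains_pattern (D - {i}) I \<pi> Y
      \<Longrightarrow> card Y \<le> C' * M ^ d"
    and recurrence: "card D * (t choose card I) * C' * t ^ card D + C0 * (card I - 1) ^ card D \<le> C0 * t ^ Suc d"
    and C0: "C0 > 0"
  shows "X \<subseteq> grid D (t ^ j) \<Longrightarrow> \<not> contains_pattern D I \<pi> X \<Longrightarrow> card X \<le> C0 * (t ^ j) ^ Suc d"
proof (induction j arbitrary: X)
  case 0
  then have "card X \<le> card (grid D 1)" using finite_grid[OF D] by (simp add: card_mono)
  also have "\<dots> = 1" by (simp add: card_grid D)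
  finally show ?case using C0 by simp
next
  case (Suc j)
  define M where "M = t ^ j"
  have "card X \<le> card D * (M * ((t choose card I) * (C' * M ^ d))) * t ^ card D
      + (C0 * M ^ Suc d) * (card I - 1) ^ card D"
  proof (rule card_avoiding_le_blocks[OF D I t])
    show "card Y \<le> C' * M ^ d"
      if "i \<in> D" "Y \<subseteq> grid (D - {i}) M" "\<not> contains_pattern (D - {i}) I \<pi> Y" for i Y
      using lower[OF that] .
    show "card Y \<le> C0 * M ^ Suc d" if "Y \<subseteq> grid D M" "\<not> contains_pattern D I \<pi> Y" for Y
      using Suc.IH that unfolding M_def .
    show "X \<subseteq> grid D (M * t)" using Suc.prems(1) by (simp add: M_def mult.commute)
    show "\<not> contains_pattern D I \<pi> X" using Suc.prems(2) .
  qed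
  also have "\<dots> = (card D * (t choose card I) * C' * t ^ card D + C0 * (card I - 1) ^ card D) * M ^ Suc d"
    by (simp add: algebra_simps)
  also have "\<dots> \<le> C0 * t ^ Suc d * M ^ Suc d" using recurrence by (rule mult_le_mono1)
  also have "\<dots> = C0 * (t ^ Suc j) ^ Suc d" by (simp add: M_def power_mult_distrib)
  finally show ?case .
qed

lemma ex_power_between:
  fixes t m :: nat
  assumes "t \<ge> 2" "m \<ge> 1"
  shows "\<exists>j. m \<le> t ^ j \<and> t ^ j \<le> t * m"
proof -
  have "m < 2 ^ m" by (rule less_exp)
  also have "\<dots> \<le> t ^ m" using assms(1) by (rule power_mono) simp
  finally have ex: "\<exists>j. m \<le> t ^ j" by (intro exI[of _ m]) simp
  define j where "j = (LEAST j. m \<le> t ^ j)"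
  have "m \<le> t ^ j" unfolding j_def by (rule LeastI_ex[OF ex])
  moreover have "t ^ j \<le> t * m"
  proof (cases j)
    case 0
    then show ?thesis using assms by simp
  next
    case (Suc j')
    then have "\<not> m \<le> t ^ j'" using not_less_Least[of j' "\<lambda>j. m \<le> t ^ j"] unfolding j_def by simp
    then show ?thesis using Suc by simp
  qed
  ultimately show ?thesis by blast
qed

lemma card_le_of_power_grid_bound:
  assumes t: "t \<ge> 2" and D: "D \<noteq> {}"
    and powers: "\<And>j X. X \<subseteq> grid D (t ^ j) \<Longrightarrow> P X \<Longrightarrow> card X \<le> C * (t ^ j) ^ k"
    and X: "X \<subseteq> grid D m" "P X"
  shows "card X \<le> C * t ^ k * m ^ k"
proof (cases "m = 0")
  case True
  then show ?thesis using X(1) grid_0[OF D] by simp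
next
  case False
  then obtain j where j: "m \<le> t ^ j" "t ^ j \<le> t * m" using ex_power_between[OF t, of m] by auto
  have "card X \<le> C * (t ^ j) ^ k" using powers[OF order.trans[OF X(1) grid_mono[OF j(1)]] X(2)] .
  also have "\<dots> \<le> C * (t * m) ^ k" using j(2) by (intro mult_le_mono2 power_mono) simp_all
  also have "\<dots> = C * t ^ k * m ^ k" by (simp add: power_mult_distrib)
  finally show ?thesis .
qed

lemma card_avoiding_le_step:
  assumes D: "finite D" "D \<noteq> {}" and I: "finite I"
    and lower: "\<And>i M Y. i \<in> D \<Longrightarrow> Y \<subseteq> grid (D - {i}) M \<Longrightarrow> \<not> contains_pattern (D - {i}) I \<pi> Y
      \<Longrightarrow> card Y \<le> C' * M ^ d"
  shows "\<exists>C. \<forall>m X. X \<subseteq> grid D m \<longrightarrow> \<not> contains_pattern D I \<pi> X \<longrightarrow> card X \<le> C * m ^ Suc d"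
proof -
  define k where "k = card D"
  define N where "N = card I"
  define t where "t = 2 * (N - 1) ^ k + 2"
  define K where "K = k * (t choose N) * C'"
  define C0 where "C0 = 2 * K * t ^ k + 1"
  \<comment> \<open>With t \<ge> 2 (N - 1)^k the narrow blocks cost at most C0 t / 2, and C0 \<ge> 2 K t^k absorbs the wide ones.\<close>
  have recurrence: "K * t ^ k + C0 * (N - 1) ^ k \<le> C0 * t ^ Suc d"
  proof -
    have "C0 * t = 2 * C0 * (N - 1) ^ k + 2 * C0" unfolding t_def by (simp add: algebra_simps)
    moreover have "K * t ^ k \<le> 2 * C0" unfolding C0_def by simp
    moreover have "C0 * t \<le> C0 * t ^ Suc d" unfolding t_def by (intro mult_le_mono2 self_le_power) simp_all
    ultimately show ?thesis by linarith
  qed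
  have t: "t \<ge> 2" unfolding t_def by simp
  have powers: "card X \<le> C0 * (t ^ j) ^ Suc d" if "X \<subseteq> grid D (t ^ j)" "\<not> contains_pattern D I \<pi> X" for j X
  proof (rule card_avoiding_le_at_powers[OF D(1) I _ lower _ _ that])
    show "t > 0" "C0 > 0" using t unfolding C0_def by simp_all
    show "card D * (t choose card I) * C' * t ^ card D + C0 * (card I - 1) ^ card D \<le> C0 * t ^ Suc d"
      using recurrence unfolding K_def k_def N_def .
  qed
  show ?thesis
  proof (intro exI[of _ "C0 * t ^ Suc d"] allI impI)
    fix m X assume X: "X \<subseteq> grid D m" "\<not> contains_pattern D I \<pi> X"
    show "card X \<le> C0 * t ^ Suc d * m ^ Suc d"
      using card_le_of_power_grid_bound[where P = "\<lambda>X. \<not> contains_pattern D I \<pi> X", OF t D(2) powers X(1)] X(2)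
      by simp
  qed
qed

theorem card_pattern_avoiding_le:
  assumes I: "finite I"
  shows "finite D \<Longrightarrow> card D = Suc d \<Longrightarrow>
    \<exists>C. \<forall>m X. X \<subseteq> grid D m \<longrightarrow> \<not> contains_pattern D I \<pi> X \<longrightarrow> card X \<le> C * m ^ d"
proof (induction d arbitrary: D)
  case 0
  then obtain c where D: "D = {c}" using card_1_singletonE by auto
  have "card X \<le> card I * m ^ 0" if "X \<subseteq> grid D m" "\<not> contains_pattern D I \<pi> X" for m X
  proof -
    have "\<not> card I \<le> card X" using contains_pattern_singleton[of X c m I \<pi>] that D I by blast
    then show ?thesis by simp
  qed
  then show ?case by blast
next
  case (Suc d)
  have "\<forall>i\<in>D. \<exists>C. \<forall>M Y. Y \<subseteq> grid (D - {i}) M \<longrightarrow> \<not> contains_pattern (D - {i}) I \<pi> Y \<longrightarrow> card Y \<le> C * M ^ d"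
  proof
    fix i assume "i \<in> D"
    then have "finite (D - {i})" "card (D - {i}) = Suc d" using Suc.prems by simp_all
    then show "\<exists>C. \<forall>M Y. Y \<subseteq> grid (D - {i}) M \<longrightarrow> \<not> contains_pattern (D - {i}) I \<pi> Y \<longrightarrow> card Y \<le> C * M ^ d"
      by (rule Suc.IH)
  qed
  then obtain C where C: "\<forall>i\<in>D. \<forall>M Y. Y \<subseteq> grid (D - {i}) M \<longrightarrow> \<not> contains_pattern (D - {i}) I \<pi> Y
      \<longrightarrow> card Y \<le> C i * M ^ d"
    by (elim bchoice[elim_format] exE)
  have lower: "card Y \<le> (\<Sum>i\<in>D. C i) * M ^ d"
    if "i \<in> D" "Y \<subseteq> grid (D - {i}) M" "\<not> contains_pattern (D - {i}) I \<pi> Y" for i M Y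
  proof -
    have "C i \<le> (\<Sum>i\<in>D. C i)" by (rule member_le_sum[OF that(1) _ Suc.prems(1)]) simp
    moreover have "card Y \<le> C i * M ^ d" using C that by blast
    ultimately show ?thesis by (meson le_trans mult_le_mono1)
  qed
  have "D \<noteq> {}" using Suc.prems(2) by auto
  then show ?case by (rule card_avoiding_le_step[OF Suc.prems(1) _ I lower])
qed

lemma realizer_size_ge_standard_example:
  assumes R: "realizer A R k' L"
    and ab: "\<And>i. i < k \<Longrightarrow> a i \<in> A \<and> b i \<in> A"
    and incomparable: "\<And>i. i < k \<Longrightarrow> (a i, b i) \<notin> R"
    and below: "\<And>i j. i < k \<Longrightarrow> j < k \<Longrightarrow> i \<noteq> j \<Longrightarrow> (a i, b j) \<in> R"
  shows "k \<le> k'"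
proof -
  have R_eq: "R = {p \<in> A \<times> A. \<forall>l<k'. p \<in> L l}"
    and ext: "\<And>l. l < k' \<Longrightarrow> linear_order_on A (L l) \<and> R \<subseteq> L l"
    using R unfolding realizer_def linear_extension_def by auto
  have "\<exists>l. l < k' \<and> (a i, b i) \<notin> L l" if "i < k" for i
    using incomparable[OF that] ab[OF that] R_eq by blast
  then obtain g where g: "\<And>i. i < k \<Longrightarrow> g i < k' \<and> (a i, b i) \<notin> L (g i)" by metis
  have reversed: "(b i, a i) \<in> L (g i)" if "i < k" for i
  proof -
    have "total_on A (L (g i))" "refl_on A (L (g i))"
      using ext g that unfolding linear_order_on_def partial_order_on_def preorder_on_def by blast+
    then show ?thesis using g[OF that] ab[OF that] unfolding total_on_def refl_on_def by metis
  qed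
  \<comment> \<open>One extension cannot reverse two pairs: it would contain a i \<le> b j \<le> a j \<le> b i.\<close>
  have "inj_on g {..<k}"
  proof (rule inj_onI)
    fix i j assume ij: "i \<in> {..<k}" "j \<in> {..<k}" "g i = g j"
    show "i = j"
    proof (rule ccontr)
      assume "i \<noteq> j"
      have "trans (L (g i))" "R \<subseteq> L (g i)"
        using ext g ij unfolding linear_order_on_def partial_order_on_def preorder_on_def by auto
      moreover have "(a i, b j) \<in> R" "(a j, b i) \<in> R" using below ij \<open>i \<noteq> j\<close> by auto
      moreover have "(b j, a j) \<in> L (g i)" using reversed ij by auto
      ultimately have "(a i, b i) \<in> L (g i)" unfolding trans_def by blast
      then show False using g[of i] ij(1) by simp
    qed
  qed
  moreover have "g ` {..<k} \<subseteq> {..<k'}" using g by auto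
  ultimately show ?thesis using card_inj_on_le[of g "{..<k}" "{..<k'}"] by simp
qed

text \<open>poset_dim is a LEAST, so it says nothing unless some realizer exists.\<close>
lemma poset_dim_ge_standard_example:
  assumes "realizer A R k' L"
    and "\<And>i. i < k \<Longrightarrow> a i \<in> A \<and> b i \<in> A"
    and "\<And>i. i < k \<Longrightarrow> (a i, b i) \<notin> R"
    and "\<And>i j. i < k \<Longrightarrow> j < k \<Longrightarrow> i \<noteq> j \<Longrightarrow> (a i, b j) \<in> R"
  shows "k \<le> poset_dim A R"
proof -
  have "\<exists>L. realizer A R (poset_dim A R) L"
    unfolding poset_dim_def by (rule LeastI_ex) (use assms(1) in blast)
  then obtain L' where "realizer A R (poset_dim A R) L'" ..
  then show ?thesis by (rule realizer_size_ge_standard_example[OF _ assms(2-4)])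
qed

lemma linear_order_on_key:
  fixes key :: "'a \<Rightarrow> 'b::linorder"
  assumes "inj_on key S"
  shows "linear_order_on S {(s, s'). s \<in> S \<and> s' \<in> S \<and> key s \<le> key s'}"
  using assms unfolding linear_order_on_def partial_order_on_def preorder_on_def refl_on_def
    trans_def antisym_def total_on_def inj_on_def
  by auto

definition coordinate_order :: "'a set \<Rightarrow> nat \<Rightarrow> ('a \<Rightarrow> nat \<Rightarrow> nat) \<Rightarrow> 'a rel" where
  "coordinate_order A k h = {(x, y). x \<in> A \<and> y \<in> A \<and> (\<forall>c<k. h x c \<le> h y c)}"

lemma partial_order_on_coordinate_order:
  assumes "\<And>x y. x \<in> A \<Longrightarrow> y \<in> A \<Longrightarrow> \<forall>c<k. h x c = h y c \<Longrightarrow> x = y"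
  shows "partial_order_on A (coordinate_order A k h)"
proof -
  have "antisym (coordinate_order A k h)"
  proof (rule antisymI)
    fix x y assume "(x, y) \<in> coordinate_order A k h" "(y, x) \<in> coordinate_order A k h"
    then show "x = y" unfolding coordinate_order_def by (auto intro!: assms order_antisym)
  qed
  then show ?thesis
    unfolding partial_order_on_def preorder_on_def refl_on_def trans_def coordinate_order_def
    by (auto intro: order_trans)
qed

lemma induced_coordinate_order: "S \<subseteq> A \<Longrightarrow> induced (coordinate_order A k h) S = coordinate_order S k h"
  unfolding induced_def coordinate_order_def by auto

text \<open>The c-th extension orders lexicographically by coordinate c, then by the coordinate sum,
  then by the element itself; the coordinate sum makes it extend the product order.\<close>
lemma realizer_coordinate_order:
  fixes S :: "'a::linorder set"
  assumes inj: "\<And>x y. x \<in> S \<Longrightarrow> y \<in> S \<Longrightarrow> \<forall>c<k. h x c = h y c \<Longrightarrow> x = y"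
  shows "\<exists>L. realizer S (coordinate_order S k h) k L"
proof -
  define key where "key c s = (h s c, \<Sum>l<k. h s l, s)" for c s
  define L where "L c = {(s, s'). s \<in> S \<and> s' \<in> S \<and> key c s \<le> key c s'}" for c
  have extends: "coordinate_order S k h \<subseteq> L c" if "c < k" for c
  proof
    fix p assume "p \<in> coordinate_order S k h"
    then obtain s s' where p: "p = (s, s')" "s \<in> S" "s' \<in> S" and le: "\<forall>l<k. h s l \<le> h s' l"
      unfolding coordinate_order_def by blast
    have "(\<Sum>l<k. h s l) \<le> (\<Sum>l<k. h s' l)" using le by (intro sum_mono) simp
    moreover have "s = s'" if "(\<Sum>l<k. h s l) = (\<Sum>l<k. h s' l)"
    proof (rule inj[OF p(2,3)])
      show "\<forall>l<k. h s l = h s' l"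
      proof (intro allI impI)
        fix l assume "l < k"
        then show "h s l = h s' l" by (intro sum_mono_inv[OF that]) (use le in auto)
      qed
    qed
    ultimately have "key c s \<le> key c s'" using le that unfolding key_def by force
    then show "p \<in> L c" unfolding L_def using p by simp
  qed
  have "realizer S (coordinate_order S k h) k L"
    unfolding realizer_def linear_extension_def
  proof (intro conjI allI impI)
    fix c assume "c < k"
    show "linear_order_on S (L c)" unfolding L_def by (rule linear_order_on_key) (simp add: inj_on_def key_def)
    show "coordinate_order S k h \<subseteq> L c" using extends \<open>c < k\<close> .
  next
    show "coordinate_order S k h = {p \<in> S \<times> S. \<forall>c<k. p \<in> L c}"
    proof
      show "coordinate_order S k h \<subseteq> {p \<in> S \<times> S. \<forall>c<k. p \<in> L c}"
        using extends unfolding coordinate_order_def by blast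
      show "{p \<in> S \<times> S. \<forall>c<k. p \<in> L c} \<subseteq> coordinate_order S k h"
        unfolding coordinate_order_def L_def key_def by auto
    qed
  qed
  then show ?thesis by blast
qed

text \<open>Points 0..k-1 play the elements a_i and points k..2k-1 the elements b_i of the standard
  example; in coordinate c they are arranged as a_j (j \<noteq> c) < b_c < a_c < b_j (j \<noteq> c).\<close>
definition standard_example_pattern :: "nat \<Rightarrow> nat \<Rightarrow> nat \<Rightarrow> nat" where
  "standard_example_pattern k c x =
     (if x < k then (if x = c then k + 1 else x) else (if x - k = c then k else k + 2 + (x - k)))"

lemma standard_example_pattern_below:
  "i < k \<Longrightarrow> j < k \<Longrightarrow> i \<noteq> j \<Longrightarrow> standard_example_pattern k c i < standard_example_pattern k c (k + j)"
  unfolding standard_example_pattern_def by auto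

lemma standard_example_pattern_reversed:
  "i < k \<Longrightarrow> standard_example_pattern k i (k + i) < standard_example_pattern k i i"
  unfolding standard_example_pattern_def by auto

lemma poset_dim_ge_if_contains_standard_example_pattern:
  fixes S :: "'a::linorder set"
  assumes inj: "\<And>x y. x \<in> S \<Longrightarrow> y \<in> S \<Longrightarrow> \<forall>c<k. h x c = h y c \<Longrightarrow> x = y"
    and contains: "contains_pattern {..<k} {..<2 * k} (standard_example_pattern k) (h ` S)"
  shows "k \<le> poset_dim S (coordinate_order S k h)"
proof -
  obtain \<phi> where \<phi>: "\<phi> ` {..<2 * k} \<subseteq> h ` S"
    "\<forall>c\<in>{..<k}. \<forall>i\<in>{..<2 * k}. \<forall>j\<in>{..<2 * k}.
       standard_example_pattern k c i < standard_example_pattern k c j \<longrightarrow> \<phi> i c < \<phi> j c"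
    using contains unfolding contains_pattern_def by blast
  define \<sigma> where "\<sigma> i = inv_into S h (\<phi> i)" for i
  have \<sigma>: "\<sigma> i \<in> S" "h (\<sigma> i) = \<phi> i" if "i < 2 * k" for i
  proof -
    have "\<phi> i \<in> h ` S" using \<phi>(1) that by blast
    then show "\<sigma> i \<in> S" "h (\<sigma> i) = \<phi> i" unfolding \<sigma>_def by (fact inv_into_into, fact f_inv_into_f)
  qed
  obtain L where L: "realizer S (coordinate_order S k h) k L"
    using realizer_coordinate_order[OF inj] by blast
  show ?thesis
  proof (rule poset_dim_ge_standard_example[OF L, of k \<sigma> "\<lambda>i. \<sigma> (k + i)"])
    show "\<sigma> i \<in> S \<and> \<sigma> (k + i) \<in> S" if "i < k" for i using \<sigma>(1) that by simp
  next
    fix i assume i: "i < k"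
    have "\<phi> (k + i) i < \<phi> i i" using \<phi>(2) standard_example_pattern_reversed[OF i] i by simp
    then show "(\<sigma> i, \<sigma> (k + i)) \<notin> coordinate_order S k h"
      unfolding coordinate_order_def using \<sigma>(2) i by fastforce
  next
    fix i j assume ij: "i < k" "j < k" "i \<noteq> j"
    have "\<phi> i c < \<phi> (k + j) c" if "c < k" for c
      using \<phi>(2) standard_example_pattern_below[OF ij] ij that by simp
    then show "(\<sigma> i, \<sigma> (k + j)) \<in> coordinate_order S k h"
      unfolding coordinate_order_def using \<sigma> ij by (simp add: less_imp_le)
  qed
qed

lemma poset_dim_empty: "poset_dim {} {} = 0"
  unfolding poset_dim_def by (rule Least_eq_0, rule exI[of _ "\<lambda>_. {}"]) (simp add: realizer_def)

lemma f_dim_le: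
  assumes po: "partial_order_on {..<n} r"
    and small: "\<And>S. S \<subseteq> {..<n} \<Longrightarrow> poset_dim S (induced r S) \<le> d \<Longrightarrow> card S \<le> B"
  shows "f_dim d n \<le> B"
proof -
  define Q where "Q m \<longleftrightarrow> (\<forall>r. partial_order_on {..<n} r \<longrightarrow>
       (\<exists>S \<subseteq> {..<n}. card S = m \<and> poset_dim S (induced r S) \<le> d))" for m
  have "Q 0" unfolding Q_def by (auto simp: poset_dim_empty induced_def intro!: exI[of _ "{}"])
  moreover have "m \<le> n" if "Q m" for m
    using that po card_mono[of "{..<n}"] unfolding Q_def by fastforce
  ultimately have "Q (Greatest Q)" by (rule GreatestI_nat)
  then obtain S where S: "S \<subseteq> {..<n}" "card S = Greatest Q" "poset_dim S (induced r S) \<le> d"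
    using po unfolding Q_def by blast
  have "f_dim d n = Greatest Q" unfolding f_dim_def Q_def ..
  with small[OF S(1,3)] S(2) show ?thesis by simp
qed

lemma exists_poset_with_small_low_dim_subposets:
  assumes avoid: "\<And>X. X \<subseteq> grid {..<k} m \<Longrightarrow>
      \<not> contains_pattern {..<k} {..<2 * k} (standard_example_pattern k) X \<Longrightarrow> card X \<le> B"
    and n: "n \<le> m ^ k"
  shows "\<exists>r. partial_order_on {..<n} r \<and> (\<forall>S \<subseteq> {..<n}. poset_dim S (induced r S) < k \<longrightarrow> card S \<le> B)"
proof -
  let ?G = "grid {..<k} m"
  obtain h where h: "bij_betw h {0..<card ?G} ?G"
    using ex_bij_betw_nat_finite[OF finite_grid] by blast
  have "{..<n} \<subseteq> {0..<card ?G}" using n by (auto simp: card_grid)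
  then have inj: "inj_on h {..<n}" and into: "h ` {..<n} \<subseteq> ?G"
    using h unfolding bij_betw_def by (auto intro: inj_on_subset)
  have coordinates_inj: "x = y" if "x \<in> {..<n}" "y \<in> {..<n}" "\<forall>c<k. h x c = h y c" for x y
  proof -
    have "h x \<in> ?G" "h y \<in> ?G" using into that(1,2) by blast+
    then have "h x = h y" unfolding grid_def by (rule PiE_ext) (use that(3) in simp)
    with inj show ?thesis using that(1,2) by (rule inj_onD)
  qed
  define r where "r = coordinate_order {..<n} k h"
  have "partial_order_on {..<n} r"
    unfolding r_def using coordinates_inj by (rule partial_order_on_coordinate_order)
  moreover have "card S \<le> B" if S: "S \<subseteq> {..<n}" "poset_dim S (induced r S) < k" for S
  proof (rule ccontr)
    assume large: "\<not> card S \<le> B"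
    have "h ` S \<subseteq> ?G" using into S(1) by blast
    moreover have "card (h ` S) = card S" using inj_on_subset[OF inj S(1)] by (rule card_image)
    ultimately have "contains_pattern {..<k} {..<2 * k} (standard_example_pattern k) (h ` S)"
      using avoid[of "h ` S"] large by linarith
    moreover have "x = y" if "x \<in> S" "y \<in> S" "\<forall>c<k. h x c = h y c" for x y
      using coordinates_inj[of x y] that S(1) by blast
    ultimately have "k \<le> poset_dim S (coordinate_order S k h)"
      by (intro poset_dim_ge_if_contains_standard_example_pattern)
    moreover have "induced r S = coordinate_order S k h"
      unfolding r_def using S(1) by (rule induced_coordinate_order)
    ultimately show False using S(2) by simp
  qed
  ultimately show ?thesis by blast
qed

lemma ceiling_root_bounds:
  fixes n d :: nat
  assumes "n \<ge> 1"
  defines "m \<equiv> nat \<lceil>real n powr (1 / real (d + 1))\<rceil>"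
  shows "n \<le> m ^ (d + 1)" and "real m ^ d \<le> 2 ^ d * real n powr (real d / real (d + 1))"
proof -
  define x where "x = real n powr (1 / real (d + 1))"
  have x: "x \<ge> 1" unfolding x_def using assms(1) by (intro ge_one_powr_ge_zero) auto
  have x_power: "x ^ j = real n powr (real j / real (d + 1))" for j
  proof -
    have "x ^ j = x powr real j" using x by (simp add: powr_realpow)
    also have "\<dots> = real n powr (real j / real (d + 1))" unfolding x_def by (simp add: powr_powr)
    finally show ?thesis .
  qed
  have m: "x \<le> real m" "real m \<le> 2 * x"
    unfolding m_def x_def[symmetric] using x real_nat_ceiling_ge[of x] by linarith+
  have "real n = x ^ (d + 1)" using x_power[of "d + 1"] assms(1) by simp
  also have "\<dots> \<le> real m ^ (d + 1)" using m x by (intro power_mono) auto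
  finally show "n \<le> m ^ (d + 1)" by (metis of_nat_le_iff of_nat_power)
  have "real m ^ d \<le> (2 * x) ^ d" using m x by (intro power_mono) auto
  also have "\<dots> = 2 ^ d * real n powr (real d / real (d + 1))" by (simp add: power_mult_distrib x_power)
  finally show "real m ^ d \<le> 2 ^ d * real n powr (real d / real (d + 1))" .
qed

theorem theorem2:
  fixes d :: nat
  assumes "d > 0"
  shows "(\<lambda>n. real (f_dim d n)) \<in> O(\<lambda>n. real n powr (real d / real (d + 1)))"
proof -
  have "\<exists>C. \<forall>m X. X \<subseteq> grid {..<d + 1} m \<longrightarrow>
      \<not> contains_pattern {..<d + 1} {..<2 * (d + 1)} (standard_example_pattern (d + 1)) X \<longrightarrow> card X \<le> C * m ^ d"
    by (rule card_pattern_avoiding_le) simp_all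
  then obtain C where C: "\<And>m X. X \<subseteq> grid {..<d + 1} m \<Longrightarrow>
      \<not> contains_pattern {..<d + 1} {..<2 * (d + 1)} (standard_example_pattern (d + 1)) X \<Longrightarrow> card X \<le> C * m ^ d"
    by blast
  have bound: "real (f_dim d n) \<le> real C * 2 ^ d * real n powr (real d / real (d + 1))" if n: "n \<ge> 1" for n
  proof -
    define m where "m = nat \<lceil>real n powr (1 / real (d + 1))\<rceil>"
    have "n \<le> m ^ (d + 1)" unfolding m_def using n by (rule ceiling_root_bounds(1))
    then obtain r where r: "partial_order_on {..<n} r"
      "\<forall>S \<subseteq> {..<n}. poset_dim S (induced r S) < d + 1 \<longrightarrow> card S \<le> C * m ^ d"
      using exists_poset_with_small_low_dim_subposets[OF C] by blast
    have "f_dim d n \<le> C * m ^ d"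
      using r(2) by (intro f_dim_le[OF r(1)]) simp
    then have "real (f_dim d n) \<le> real C * real m ^ d" by (simp flip: of_nat_power of_nat_mult)
    also have "\<dots> \<le> real C * (2 ^ d * real n powr (real d / real (d + 1)))"
      using ceiling_root_bounds(2)[OF n] unfolding m_def by (intro mult_left_mono) simp_all
    finally show ?thesis by (simp add: mult.assoc)
  qed
  show ?thesis
  proof (rule bigoI[where c = "real C * 2 ^ d"])
    show "\<forall>\<^sub>F n in at_top. norm (real (f_dim d n)) \<le> real C * 2 ^ d * norm (real n powr (real d / real (d + 1)))"
      using eventually_ge_at_top[of "1::nat"] by eventually_elim (use bound in auto)
  qed
qed

end
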